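(* Let $\theta\in(0,1)$ be arbitrary (rational or irrational), $\alpha_0,\alpha_1,\alpha_2\in\mathbb{Z}$ with $\alpha_2\ne0$, $u_0\in L^2(0,2\pi)$, and $p,q$ positive coprime integers, $t_r=2\pi p/q$. Let $u$ be the $L^2$ solution of $\partial_t u=-i\sum_{m=0}^2\alpha_m(-i\partial_x)^m u$, $u(x,0)=u_0(x)$, $e^{i2\pi\theta}\partial_x^m u(0,t)=\partial_x^m u(2\pi,t)$ ($m=0,1$). Then there exist constants $c_0,\dots,c_{q-1}\in\mathbb{C}$ such that for a.e. $x\in[0,2\pi]$, $$u(x,t_r)=e^{i\theta x}\sum_{k=0}^{q-1}c_k\,z_0^*\!\left(x-s_\theta t_r-\tfrac{2\pi k}{q}\right),\qquad z_0(x)=e^{-i\theta x}u_0(x),\ s_\theta=\alpha_1+2\alpha_2\theta .$$ In particular $u(\cdot,t_r)$ is a finite linear combination of translated copies of $u_0$ for every $\theta\in(0,1)$.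
   Context: The $L^2$ solution is $u(x,t)=\sum_{j\in\mathbb{Z}}\langle u_0,\phi_j\rangle e^{-iP(j+\theta)t}\phi_j(x)$ with $P(\lambda)=\alpha_0+\alpha_1\lambda+\alpha_2\lambda^2$, $\phi_j(x)=e^{i(j+\theta)x}/\sqrt{2\pi}$, $\langle f,g\rangle=\int_0^{2\pi}f\bar g$. $f^*$ denotes the $2\pi$-periodic extension of a function $f$ on $[0,2\pi)$: $f^*(x)=f(x-2\pi m)$ for $2\pi m\le x<2\pi(m+1)$. *)

theory Defs
  imports "HOL-Analysis.Analysis"
begin

definition phi :: "real \<Rightarrow> int \<Rightarrow> real \<Rightarrow> complex" where
  "phi \<theta> j x = exp (\<i> * complex_of_real ((real_of_int j + \<theta>) * x)) / complex_of_real (sqrt (2 * pi))"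

definition inner_L2 :: "(real \<Rightarrow> complex) \<Rightarrow> (real \<Rightarrow> complex) \<Rightarrow> complex" where
  "inner_L2 f g = (LINT x:{0..2*pi}|lborel. f x * cnj (g x))"

definition Ppoly :: "int \<Rightarrow> int \<Rightarrow> int \<Rightarrow> real \<Rightarrow> real" where
  "Ppoly a0 a1 a2 l = real_of_int a0 + real_of_int a1 * l + real_of_int a2 * l^2"

definition in_L2 :: "(real \<Rightarrow> complex) \<Rightarrow> bool" where
  "in_L2 f \<longleftrightarrow> f \<in> borel_measurable lborel \<and>
     set_integrable lborel {0..2*pi} (\<lambda>x. (cmod (f x))^2)"

definition partial_sol :: "real \<Rightarrow> int \<Rightarrow> int \<Rightarrow> int \<Rightarrow> (real \<Rightarrow> complex) \<Rightarrow> nat \<Rightarrow> real \<Rightarrow> real \<Rightarrow> complex" where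
  "partial_sol \<theta> a0 a1 a2 u0 N x t =
     (\<Sum>j\<in>{-int N..int N}. inner_L2 u0 (phi \<theta> j)
        * exp (- \<i> * complex_of_real (Ppoly a0 a1 a2 (real_of_int j + \<theta>) * t)) * phi \<theta> j x)"

definition is_L2_solution :: "real \<Rightarrow> int \<Rightarrow> int \<Rightarrow> int \<Rightarrow> (real \<Rightarrow> complex) \<Rightarrow> (real \<Rightarrow> real \<Rightarrow> complex) \<Rightarrow> bool" where
  "is_L2_solution \<theta> a0 a1 a2 u0 u \<longleftrightarrow>
     (\<forall>t. in_L2 (\<lambda>x. u x t) \<and>
        (\<lambda>N. LINT x:{0..2*pi}|lborel. (cmod (u x t - partial_sol \<theta> a0 a1 a2 u0 N x t))^2)
          \<longlonglongrightarrow> 0)"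

definition per_ext :: "(real \<Rightarrow> complex) \<Rightarrow> real \<Rightarrow> complex" where
  "per_ext f x = f (x - 2 * pi * of_int \<lfloor>x / (2 * pi)\<rfloor>)"

end

theory Submission
  imports Defs
begin

text \<open>At the rational time \<open>t = 2\<pi>p/q\<close> the phase \<open>P(j + \<theta>) t\<close> is a constant plus a part
  linear in \<open>j\<close> with slope \<open>s t\<close>, where \<open>s = \<alpha>1 + 2 \<alpha>2 \<theta>\<close>, plus \<open>2\<pi> \<alpha>2 p j^2 / q\<close>, whose exponential is
  \<open>q\<close>-periodic in \<open>j\<close> and therefore a combination of the characters \<open>exp (-2\<pi>\<i> j k / q)\<close>.
  Hence \<open>exp (\<i>\<theta>x) \<Sum>k c k z0*(x - s t - 2\<pi>k/q)\<close> has the same coefficients \<open>\<langle>-, phi j\<rangle>\<close> as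
  \<open>u(-, t)\<close>, and the latter are read off from the \<open>L^2\<close> convergence of the partial sums.
  Integrable functions on \<open>[0, 2\<pi>]\<close> with equal \<open>phi j\<close>-coefficients agree almost everywhere:
  after multiplication by \<open>exp (-\<i>\<theta>x)\<close> this is the uniqueness of Fourier coefficients, obtained
  by Weierstrass approximation in \<open>cos (x - m)\<close>, then passing to indicators of arcs and of
  half-lines.\<close>

lemma integrable_mult_bounded:
  fixes G h :: "real \<Rightarrow> complex"
  assumes int: "integrable lborel G" and [measurable]: "h \<in> borel_measurable borel"
    and bd: "\<And>x. norm (h x) \<le> B"
  shows "integrable lborel (\<lambda>x. G x * h x)"
proof (rule Bochner_Integration.integrable_bound[of _ "\<lambda>x. B * norm (G x)"])
  show "integrable lborel (\<lambda>x. B * norm (G x))" using int by auto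
  have [measurable]: "G \<in> borel_measurable borel" using int by auto
  show "(\<lambda>x. G x * h x) \<in> borel_measurable lborel" by measurable
  have "B \<ge> 0" using bd norm_ge_zero order_trans by blast
  then show "AE x in lborel. norm (G x * h x) \<le> norm (B * norm (G x))"
    using bd by (intro AE_I2) (simp add: norm_mult, metis mult.commute mult_left_mono norm_ge_zero)
qed

lemma set_integrable_mult_bounded:
  fixes f h :: "real \<Rightarrow> complex"
  assumes "set_integrable lborel S f" "h \<in> borel_measurable borel" "\<And>x. norm (h x) \<le> B"
  shows "set_integrable lborel S (\<lambda>x. f x * h x)"
proof -
  have "integrable lborel (\<lambda>x. (indicator S x *\<^sub>R f x) * h x)"
    using assms(1) unfolding set_integrable_def by (rule integrable_mult_bounded[OF _ assms(2,3)])
  then show ?thesis unfolding set_integrable_def by (simp add: mult.assoc)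
qed

lemma set_integral_sum:
  fixes f :: "'i \<Rightarrow> real \<Rightarrow> complex"
  assumes "\<And>i. i \<in> I \<Longrightarrow> set_integrable lborel A (f i)"
  shows "set_integrable lborel A (\<lambda>x. \<Sum>i\<in>I. f i x)"
    and "(LINT x:A|lborel. (\<Sum>i\<in>I. f i x)) = (\<Sum>i\<in>I. LINT x:A|lborel. f i x)"
proof -
  have i: "\<And>i. i \<in> I \<Longrightarrow> integrable lborel (\<lambda>x. indicator A x *\<^sub>R f i x)"
    using assms unfolding set_integrable_def by auto
  show "set_integrable lborel A (\<lambda>x. \<Sum>i\<in>I. f i x)"
    unfolding set_integrable_def scaleR_sum_right
    by (rule Bochner_Integration.integrable_sum[where f="\<lambda>i x. indicator A x *\<^sub>R f i x"]) (rule i)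
  show "(LINT x:A|lborel. (\<Sum>i\<in>I. f i x)) = (\<Sum>i\<in>I. LINT x:A|lborel. f i x)"
    unfolding set_lebesgue_integral_def scaleR_sum_right
    by (rule Bochner_Integration.integral_sum[where f="\<lambda>i x. indicator A x *\<^sub>R f i x"]) (rule i)
qed

lemma zero_if_norm_le_epsilon_mult:
  fixes z :: complex
  assumes K: "K \<ge> 0" and bound: "\<And>e. e > 0 \<Longrightarrow> norm z \<le> e * K"
  shows "z = 0"
proof (rule ccontr)
  assume "z \<noteq> 0"
  define e where "e = norm z / (2 * (K + 1))"
  have "e > 0" using \<open>z \<noteq> 0\<close> K unfolding e_def by (intro divide_pos_pos) auto
  have "e * K \<le> e * (K + 1)" using \<open>e > 0\<close> by simp
  also have "\<dots> < norm z" using \<open>z \<noteq> 0\<close> K by (simp add: e_def field_simps add_pos_nonneg)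
  finally show False using bound[OF \<open>e > 0\<close>] by simp
qed

section \<open>Uniqueness of Fourier coefficients on \<open>[0, 2\<pi>]\<close>\<close>

lemma cos_power_eq_exp_sum:
  "complex_of_real (cos y ^ n) =
    (\<Sum>l\<le>n. of_nat (n choose l) / 2 ^ n * exp (\<i> * of_real (of_int (2 * int l - int n) * y)))"
proof -
  have c: "complex_of_real (cos y) = (exp (\<i> * of_real y) + exp (- (\<i> * of_real y))) / 2"
    by (simp add: cos_of_real[symmetric] cos_exp_eq)
  have "complex_of_real (cos y ^ n) = (exp (\<i> * of_real y) + exp (- (\<i> * of_real y))) ^ n / 2 ^ n"
    by (simp add: c power_divide)
  also have "\<dots> = (\<Sum>l\<le>n. of_nat (n choose l) * exp (\<i> * of_real y) ^ l * exp (- (\<i> * of_real y)) ^ (n - l)) / 2 ^ n"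
    by (simp add: binomial_ring)
  also have "\<dots> = (\<Sum>l\<le>n. of_nat (n choose l) / 2 ^ n * exp (\<i> * of_real (of_int (2 * int l - int n) * y)))"
    unfolding sum_divide_distrib
  proof (intro sum.cong refl)
    fix l assume "l \<in> {..n}"
    then have "of_nat l * (\<i> * of_real y) + of_nat (n - l) * (- (\<i> * of_real y))
       = \<i> * of_real (of_int (2 * int l - int n) * y)"
      by (simp add: of_nat_diff algebra_simps)
    then have "exp (\<i> * of_real y) ^ l * exp (- (\<i> * of_real y)) ^ (n - l)
        = exp (\<i> * of_real (of_int (2 * int l - int n) * y))"
      by (metis exp_of_nat_mult exp_add)
    then show "of_nat (n choose l) * exp (\<i> * of_real y) ^ l * exp (- (\<i> * of_real y)) ^ (n - l) / 2 ^ n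
      = of_nat (n choose l) / 2 ^ n * exp (\<i> * of_real (of_int (2 * int l - int n) * y))"
      by simp
  qed
  finally show ?thesis .
qed

lemma integral_mult_cos_power_eq_0:
  fixes G :: "real \<Rightarrow> complex"
  assumes int: "integrable lborel G"
    and hz: "\<And>j::int. (\<integral>x. G x * exp (\<i> * of_real (of_int j * x)) \<partial>lborel) = 0"
  shows "(\<integral>x. G x * of_real (cos (x - m) ^ n) \<partial>lborel) = 0"
proof -
  define c where "c l = of_nat (n choose l) / 2 ^ n * exp (- \<i> * of_real (of_int (2 * int l - int n) * m))" for l
  have expand: "G x * of_real (cos (x - m) ^ n) =
     (\<Sum>l\<le>n. c l * (G x * exp (\<i> * of_real (of_int (2 * int l - int n) * x))))" for x
  proof -
    have "G x * of_real (cos (x - m) ^ n) =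
      (\<Sum>l\<le>n. G x * (of_nat (n choose l) / 2 ^ n * exp (\<i> * of_real (of_int (2 * int l - int n) * (x - m)))))"
      by (simp only: cos_power_eq_exp_sum sum_distrib_left)
    also have "\<dots> = (\<Sum>l\<le>n. c l * (G x * exp (\<i> * of_real (of_int (2 * int l - int n) * x))))"
    proof (intro sum.cong refl)
      fix l
      have "exp (\<i> * of_real (of_int (2 * int l - int n) * (x - m))) =
        exp (\<i> * of_real (of_int (2 * int l - int n) * x)) * exp (- \<i> * of_real (of_int (2 * int l - int n) * m))"
        by (simp add: exp_add[symmetric] algebra_simps)
      then show "G x * (of_nat (n choose l) / 2 ^ n * exp (\<i> * of_real (of_int (2 * int l - int n) * (x - m))))
        = c l * (G x * exp (\<i> * of_real (of_int (2 * int l - int n) * x)))"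
        by (simp add: c_def)
    qed
    finally show ?thesis .
  qed
  have integrable: "integrable lborel (\<lambda>x. G x * exp (\<i> * of_real (of_int k * x)))" for k :: int
  proof (rule integrable_mult_bounded[OF int, where B=1])
    show "(\<lambda>x. exp (\<i> * complex_of_real (real_of_int k * x))) \<in> borel_measurable borel"
      by (intro borel_measurable_continuous_onI continuous_intros)
    show "norm (exp (\<i> * complex_of_real (real_of_int k * x))) \<le> 1" for x
      by (simp only: norm_exp_i_times order_refl)
  qed
  have "(\<integral>x. G x * of_real (cos (x - m) ^ n) \<partial>lborel) =
      (\<integral>x. (\<Sum>l\<le>n. c l * (G x * exp (\<i> * of_real (of_int (2 * int l - int n) * x)))) \<partial>lborel)"
    by (simp only: expand)
  also have "\<dots> = (\<Sum>l\<le>n. (\<integral>x. c l * (G x * exp (\<i> * of_real (of_int (2 * int l - int n) * x))) \<partial>lborel))"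
    by (rule Bochner_Integration.integral_sum
        [where f="\<lambda>l x. c l * (G x * exp (\<i> * of_real (of_int (2 * int l - int n) * x)))"])
       (intro integrable_mult_right integrable)
  also have "\<dots> = (\<Sum>l\<le>n. c l * (\<integral>x. G x * exp (\<i> * of_real (of_int (2 * int l - int n) * x)) \<partial>lborel))"
    by (simp only: integral_mult_right_zero)
  also have "\<dots> = 0" by (simp only: hz mult_zero_right sum.neutral_const)
  finally show ?thesis .
qed

lemma integrable_mult_continuous_cos:
  fixes G :: "real \<Rightarrow> complex" and f :: "real \<Rightarrow> real"
  assumes int: "integrable lborel G" and cf: "continuous_on UNIV f"
  shows "integrable lborel (\<lambda>x. G x * of_real (f (cos (x - m))))"
proof -
  have "bounded (f ` {-1..1})"
    by (intro compact_imp_bounded compact_continuous_image continuous_on_subset[OF cf]) auto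
  then obtain B where B: "\<forall>y\<in>{-1..1}. \<bar>f y\<bar> \<le> B" by (auto simp: bounded_real)
  have [measurable]: "f \<in> borel_measurable borel" using cf by (rule borel_measurable_continuous_onI)
  show ?thesis
  proof (rule integrable_mult_bounded[OF int, where B=B])
    show "(\<lambda>x. complex_of_real (f (cos (x - m)))) \<in> borel_measurable borel" by measurable
    show "norm (complex_of_real (f (cos (x - m)))) \<le> B" for x
      using B by simp
  qed
qed

lemma integral_mult_polynomial_cos_eq_0:
  fixes G :: "real \<Rightarrow> complex"
  assumes int: "integrable lborel G"
    and hz: "\<And>j::int. (\<integral>x. G x * exp (\<i> * of_real (of_int j * x)) \<partial>lborel) = 0"
    and p: "real_polynomial_function p"
  shows "(\<integral>x. G x * of_real (p (cos (x - m))) \<partial>lborel) = 0"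
proof -
  obtain a N where pa: "p = (\<lambda>y. \<Sum>i\<le>N. a i * y ^ i)"
    using p real_polynomial_function_iff_sum by blast
  have integrable: "integrable lborel (\<lambda>x. G x * of_real (cos (x - m) ^ i))" for i
    using integrable_mult_continuous_cos[OF int, of "\<lambda>y. y ^ i"] by (simp add: continuous_intros)
  have "(\<integral>x. G x * of_real (p (cos (x - m))) \<partial>lborel) =
      (\<integral>x. (\<Sum>i\<le>N. of_real (a i) * (G x * of_real (cos (x - m) ^ i))) \<partial>lborel)"
    unfolding pa by (intro Bochner_Integration.integral_cong refl) (simp add: sum_distrib_left algebra_simps)
  also have "\<dots> = (\<Sum>i\<le>N. of_real (a i) * (\<integral>x. G x * of_real (cos (x - m) ^ i) \<partial>lborel))"
    using integrable by (simp add: integral_sum integral_mult_right_zero)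
  also have "\<dots> = 0" using integral_mult_cos_power_eq_0[OF int hz] by simp
  finally show ?thesis .
qed

lemma integral_mult_continuous_cos_eq_0:
  fixes G :: "real \<Rightarrow> complex" and \<phi> :: "real \<Rightarrow> real"
  assumes int: "integrable lborel G"
    and hz: "\<And>j::int. (\<integral>x. G x * exp (\<i> * of_real (of_int j * x)) \<partial>lborel) = 0"
    and cphi: "continuous_on UNIV \<phi>"
  shows "(\<integral>x. G x * of_real (\<phi> (cos (x - m))) \<partial>lborel) = 0"
proof -
  let ?I = "(\<integral>x. G x * of_real (\<phi> (cos (x - m))) \<partial>lborel)"
  let ?K = "(\<integral>x. norm (G x) \<partial>lborel)"
  have "norm ?I \<le> e * ?K" if e: "e > 0" for e
  proof -
    have "continuous_on {-1..1} \<phi>" using cphi by (rule continuous_on_subset) auto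
    then obtain p where p: "real_polynomial_function p"
      and pe: "\<And>y. y \<in> {-1..1} \<Longrightarrow> \<bar>\<phi> y - p y\<bar> < e"
      using Stone_Weierstrass_real_polynomial_function[of "{-1..1::real}" \<phi> e] e by auto
    have cp: "continuous_on UNIV p"
      by (intro continuous_at_imp_continuous_on ballI continuous_real_polymonial_function[OF p])
    have i1: "integrable lborel (\<lambda>x. G x * of_real (\<phi> (cos (x - m))))"
      by (rule integrable_mult_continuous_cos[OF int cphi])
    have i2: "integrable lborel (\<lambda>x. G x * of_real (p (cos (x - m))))"
      by (rule integrable_mult_continuous_cos[OF int cp])
    have "?I = (\<integral>x. G x * of_real (\<phi> (cos (x - m))) - G x * of_real (p (cos (x - m))) \<partial>lborel)"
      using i1 i2 integral_mult_polynomial_cos_eq_0[OF int hz p] by simp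
    also have "norm \<dots> \<le> (\<integral>x. norm (G x * of_real (\<phi> (cos (x - m))) - G x * of_real (p (cos (x - m)))) \<partial>lborel)"
      by (rule integral_norm_bound)
    also have "\<dots> \<le> (\<integral>x. e * norm (G x) \<partial>lborel)"
    proof (rule integral_mono)
      show "integrable lborel (\<lambda>x. norm (G x * of_real (\<phi> (cos (x - m))) - G x * of_real (p (cos (x - m)))))"
        using i1 i2 by auto
      show "integrable lborel (\<lambda>x. e * norm (G x))" using int by auto
      fix x
      have "norm (G x * of_real (\<phi> (cos (x - m))) - G x * of_real (p (cos (x - m))))
          = norm (G x) * \<bar>\<phi> (cos (x - m)) - p (cos (x - m))\<bar>"
        by (simp add: norm_mult flip: right_diff_distrib of_real_diff)
      also have "\<dots> \<le> norm (G x) * e"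
        using pe[of "cos (x - m)"] by (intro mult_left_mono) auto
      finally show "norm (G x * of_real (\<phi> (cos (x - m))) - G x * of_real (p (cos (x - m)))) \<le> e * norm (G x)"
        by (simp add: mult.commute)
    qed
    also have "\<dots> = e * ?K" by simp
    finally show ?thesis .
  qed
  moreover have "?K \<ge> 0" by (intro Bochner_Integration.integral_nonneg) auto
  ultimately show ?thesis by (intro zero_if_norm_le_epsilon_mult[where K="?K"])
qed

lemma emeasure_density_eq_integral:
  fixes f :: "real \<Rightarrow> real"
  assumes int: "integrable lborel f" and nonneg: "\<And>x. f x \<ge> 0" and A: "A \<in> sets borel"
  shows "emeasure (density lborel f) A = ennreal (\<integral>x. f x * indicator A x \<partial>lborel)"
proof -
  have [measurable]: "f \<in> borel_measurable borel" using int by auto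
  have "emeasure (density lborel f) A = (\<integral>\<^sup>+x. ennreal (f x * indicator A x) \<partial>lborel)"
    using A by (subst emeasure_density) (auto intro!: nn_integral_cong simp: indicator_def)
  also have "\<dots> = ennreal (\<integral>x. f x * indicator A x \<partial>lborel)"
    using integrable_mult_indicator[OF _ int, of A] A nonneg
    by (intro nn_integral_eq_integral) (auto simp: mult.commute)
  finally show ?thesis .
qed

text \<open>The positive and negative parts of \<open>f\<close> are densities of measures that agree on all
  half-lines, hence coincide.\<close>
lemma AE_eq_0_if_integral_Ioi_eq_0:
  fixes f :: "real \<Rightarrow> real"
  assumes int: "integrable lborel f"
    and z: "\<And>a. (\<integral>x. f x * indicator {a<..} x \<partial>lborel) = 0"
  shows "AE x in lborel. f x = 0"
proof -
  define fp where "fp x = max 0 (f x)" for x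
  define fn where "fn x = max 0 (- f x)" for x
  have ip: "integrable lborel fp" and in_: "integrable lborel fn"
    unfolding fp_def fn_def using int by auto
  have [measurable]: "fp \<in> borel_measurable borel" "fn \<in> borel_measurable borel"
    using ip in_ by auto
  have ipA: "integrable lborel (\<lambda>x. fp x * indicator A x)"
    and inA: "integrable lborel (\<lambda>x. fn x * indicator A x)" if "A \<in> sets borel" for A
    using integrable_mult_indicator[of A lborel fp] integrable_mult_indicator[of A lborel fn] ip in_ that
    by (simp_all add: mult.commute)
  have emp: "emeasure (density lborel fp) A = ennreal (\<integral>x. fp x * indicator A x \<partial>lborel)"
    and emn: "emeasure (density lborel fn) A = ennreal (\<integral>x. fn x * indicator A x \<partial>lborel)"
    if "A \<in> sets borel" for A
    using that ip in_ unfolding fp_def fn_def by (auto intro!: emeasure_density_eq_integral)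
  have diff: "(\<integral>x. fp x * indicator A x \<partial>lborel) - (\<integral>x. fn x * indicator A x \<partial>lborel)
      = (\<integral>x. f x * indicator A x \<partial>lborel)" if A: "A \<in> sets borel" for A
  proof -
    have "(\<integral>x. fp x * indicator A x \<partial>lborel) - (\<integral>x. fn x * indicator A x \<partial>lborel)
       = (\<integral>x. fp x * indicator A x - fn x * indicator A x \<partial>lborel)"
      using ipA[OF A] inA[OF A] by simp
    also have "\<dots> = (\<integral>x. f x * indicator A x \<partial>lborel)"
      by (intro Bochner_Integration.integral_cong) (auto simp: fp_def fn_def max_def algebra_simps)
    finally show ?thesis .
  qed
  have MN: "density lborel fp = density lborel fn"
  proof (rule measure_eqI_lessThan)
    show "sets (density lborel fp) = sets borel" "sets (density lborel fn) = sets borel" by auto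
    fix x
    show "emeasure (density lborel fp) {x<..} < \<infinity>" using emp[of "{x<..}"] by simp
    show "emeasure (density lborel fp) {x<..} = emeasure (density lborel fn) {x<..}"
      using emp[of "{x<..}"] emn[of "{x<..}"] diff[of "{x<..}"] z[of x] by simp
  qed
  have "AE x in lborel. fp x = fn x"
  proof (rule density_unique_real[OF ip in_])
    fix A :: "real set" assume A: "A \<in> sets lborel"
    have A': "A \<in> sets borel" using A by simp
    have "ennreal (\<integral>x. fp x * indicator A x \<partial>lborel) = ennreal (\<integral>x. fn x * indicator A x \<partial>lborel)"
      using emp[OF A'] emn[OF A'] MN by simp
    moreover have "0 \<le> (\<integral>x. fp x * indicator A x \<partial>lborel)" "0 \<le> (\<integral>x. fn x * indicator A x \<partial>lborel)"
      by (auto intro!: Bochner_Integration.integral_nonneg simp: fp_def fn_def)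
    ultimately have "(\<integral>x. fp x * indicator A x \<partial>lborel) = (\<integral>x. fn x * indicator A x \<partial>lborel)"
      by simp
    then show "(\<integral>x \<in> A. fp x \<partial>lborel) = (\<integral>x \<in> A. fn x \<partial>lborel)"
      by (simp add: set_lebesgue_integral_def mult.commute)
  qed
  then show ?thesis
    by eventually_elim (auto simp: fp_def fn_def max_def split: if_splits)
qed

lemma cos_gt_cos_iff_in_arc:
  assumes a: "0 \<le> a" "a < 2*pi" and x: "0 \<le> x" "x \<le> 2*pi"
  shows "cos (x - (pi + a/2)) > cos (pi - a/2) \<longleftrightarrow> (a < x \<and> x < 2*pi)"
proof -
  define y where "y = x - (pi + a/2)"
  define r where "r = pi - a/2"
  have r: "0 < r" "r \<le> pi" using a unfolding r_def by auto
  have y: "r - 2*pi \<le> y" "y \<le> r" using x unfolding y_def r_def by auto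
  have eq: "(a < x \<and> x < 2*pi) \<longleftrightarrow> (-r < y \<and> y < r)" unfolding y_def r_def by auto
  show ?thesis unfolding y_def[symmetric] r_def[symmetric] eq
  proof (cases "y \<ge> 0")
    case True
    then show "cos r < cos y \<longleftrightarrow> (- r < y \<and> y < r)"
      using cos_mono_less_eq[of r y] r y by auto
  next
    case False
    show "cos r < cos y \<longleftrightarrow> (- r < y \<and> y < r)"
    proof (cases "y \<ge> -pi")
      case True
      then show ?thesis using cos_mono_less_eq[of r "-y"] r y False by auto
    next
      case F2: False
      have "cos y = cos (y + 2*pi)" by (rule cos_periodic[symmetric])
      also have "\<dots> \<le> cos r" using cos_mono_le_eq[of "y + 2*pi" r] r y F2 by auto
      finally show ?thesis using F2 r by auto
    qed
  qed
qed

lemma ramp_cos_tendsto_indicator_arc: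
  assumes a: "0 \<le> a" "a < 2*pi" and x: "0 \<le> x" "x \<le> 2*pi"
  shows "(\<lambda>n. max 0 (min 1 (real n * (cos (x - (pi + a/2)) - cos (pi - a/2)))))
           \<longlonglongrightarrow> indicator {a<..<2*pi} x"
proof (cases "cos (x - (pi + a/2)) > cos (pi - a/2)")
  case True
  then have ind: "x \<in> {a<..<2*pi}" using cos_gt_cos_iff_in_arc[OF a x] by auto
  define d where "d = cos (x - (pi + a/2)) - cos (pi - a/2)"
  have d: "d > 0" using True unfolding d_def by simp
  obtain N :: nat where N: "1 / d < N" using reals_Archimedean2 by blast
  have large: "1 \<le> real n * d" if "N \<le> n" for n
  proof -
    have "1 / d < real n" using N that by linarith
    then show ?thesis using d by (simp add: field_simps)
  qed
  then have "\<forall>\<^sub>F n in sequentially. max 0 (min 1 (real n * d)) = indicator {a<..<2*pi} x"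
    using ind large unfolding eventually_sequentially by (intro exI[of _ N]) (force simp: min_def)
  then show ?thesis unfolding d_def[symmetric] by (rule tendsto_eventually)
next
  case False
  then have "x \<notin> {a<..<2*pi}" using cos_gt_cos_iff_in_arc[OF a x] by auto
  moreover have "max 0 (min 1 (real n * (cos (x - (pi + a/2)) - cos (pi - a/2)))) = 0" for n
  proof -
    have "real n * (cos (x - (pi + a/2)) - cos (pi - a/2)) \<le> 0"
      using False by (intro mult_nonneg_nonpos) auto
    then show ?thesis by simp
  qed
  ultimately show ?thesis by simp
qed

lemma integral_mult_indicator_arc_eq_0:
  fixes G :: "real \<Rightarrow> complex"
  assumes int: "integrable lborel G"
    and hz: "\<And>j::int. (\<integral>x. G x * exp (\<i> * of_real (of_int j * x)) \<partial>lborel) = 0"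
    and supp: "\<And>x. x \<notin> {0..2*pi} \<Longrightarrow> G x = 0"
    and a: "0 \<le> a" "a < 2*pi"
  shows "(\<integral>x. G x * indicator {a<..<2*pi} x \<partial>lborel) = 0"
proof -
  define \<phi> where "\<phi> n y = max 0 (min 1 (real n * (y - cos (pi - a/2))))" for n :: nat and y
  define m where "m = pi + a/2"
  have [measurable]: "G \<in> borel_measurable borel" using int by auto
  have lim: "(\<lambda>n. G x * of_real (\<phi> n (cos (x - m)))) \<longlonglongrightarrow> G x * indicator {a<..<2*pi} x" for x
  proof (cases "x \<in> {0..2*pi}")
    case True
    then have "(\<lambda>n. \<phi> n (cos (x - m))) \<longlonglongrightarrow> indicator {a<..<2*pi} x"
      unfolding \<phi>_def m_def by (intro ramp_cos_tendsto_indicator_arc[OF a]) auto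
    from tendsto_mult_left[OF tendsto_of_real[OF this], of "G x"]
    show ?thesis by (auto simp: indicator_def)
  qed (use supp in simp)
  have "(\<lambda>n. (\<integral>x. G x * of_real (\<phi> n (cos (x - m))) \<partial>lborel))
          \<longlonglongrightarrow> (\<integral>x. G x * indicator {a<..<2*pi} x \<partial>lborel)"
  proof (rule integral_dominated_convergence[where w="\<lambda>x. norm (G x)"])
    show "(\<lambda>x. G x * indicator {a<..<2*pi} x) \<in> borel_measurable lborel" by measurable
    show "(\<lambda>x. G x * of_real (\<phi> n (cos (x - m)))) \<in> borel_measurable lborel" for n
      unfolding \<phi>_def by measurable
    show "integrable lborel (\<lambda>x. norm (G x))" using int by auto
    show "AE x in lborel. (\<lambda>n. G x * of_real (\<phi> n (cos (x - m)))) \<longlonglongrightarrow> G x * indicator {a<..<2*pi} x"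
      using lim by simp
    show "AE x in lborel. norm (G x * of_real (\<phi> n (cos (x - m)))) \<le> norm (G x)" for n
    proof (rule AE_I2)
      fix x
      have "\<bar>\<phi> n (cos (x - m))\<bar> \<le> 1" unfolding \<phi>_def by auto
      then show "norm (G x * of_real (\<phi> n (cos (x - m)))) \<le> norm (G x)"
        by (simp add: norm_mult mult_left_le)
    qed
  qed
  moreover have "(\<integral>x. G x * of_real (\<phi> n (cos (x - m))) \<partial>lborel) = 0" for n
    unfolding \<phi>_def by (rule integral_mult_continuous_cos_eq_0[OF int hz]) (intro continuous_intros)
  ultimately show ?thesis by (simp add: LIMSEQ_const_iff)
qed

lemma integral_mult_indicator_Ioi_eq_0:
  fixes G :: "real \<Rightarrow> complex"
  assumes int: "integrable lborel G"
    and hz: "\<And>j::int. (\<integral>x. G x * exp (\<i> * of_real (of_int j * x)) \<partial>lborel) = 0"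
    and supp: "\<And>x. x \<notin> {0..2*pi} \<Longrightarrow> G x = 0"
  shows "(\<integral>x. G x * indicator {a<..} x \<partial>lborel) = 0"
proof (cases "a < 0")
  case True
  have "(\<integral>x. G x * indicator {a<..} x \<partial>lborel) = (\<integral>x. G x * exp (\<i> * of_real (of_int 0 * x)) \<partial>lborel)"
  proof (intro Bochner_Integration.integral_cong refl)
    fix x show "G x * indicator {a<..} x = G x * exp (\<i> * of_real (of_int 0 * x))"
      using supp[of x] True by (cases "a < x") auto
  qed
  then show ?thesis using hz[of 0] by simp
next
  case False
  show ?thesis
  proof (cases "a < 2*pi")
    case True
    have [measurable]: "G \<in> borel_measurable borel" using int by auto
    have "AE x in lborel. G x * indicator {a<..} x = G x * indicator {a<..<2*pi} x"
      using AE_lborel_singleton[of "2*pi"]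
      by eventually_elim (use supp in \<open>auto simp: indicator_def\<close>)
    then have "(\<integral>x. G x * indicator {a<..} x \<partial>lborel) = (\<integral>x. G x * indicator {a<..<2*pi} x \<partial>lborel)"
      by (intro integral_cong_AE) auto
    then show ?thesis using integral_mult_indicator_arc_eq_0[OF int hz supp _ True] False by simp
  next
    case False
    then have "(\<lambda>x. G x * indicator {a<..} x) = (\<lambda>x. 0)"
      using supp by (intro ext) (auto simp: indicator_def)
    then show ?thesis by simp
  qed
qed

lemma AE_eq_0_if_fourier_coefficients_eq_0:
  fixes G :: "real \<Rightarrow> complex"
  assumes int: "integrable lborel G"
    and hz: "\<And>j::int. (\<integral>x. G x * exp (\<i> * of_real (of_int j * x)) \<partial>lborel) = 0"
    and supp: "\<And>x. x \<notin> {0..2*pi} \<Longrightarrow> G x = 0"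
  shows "AE x in lborel. G x = 0"
proof -
  have [measurable]: "G \<in> borel_measurable borel" using int by auto
  have iI: "integrable lborel (\<lambda>x. G x * indicator A x)" if [measurable]: "A \<in> sets borel" for A
    by (rule integrable_mult_bounded[OF int, where B=1]) (auto simp: indicator_def)
  have "AE x in lborel. h (G x) = 0" if h: "bounded_linear h" for h :: "complex \<Rightarrow> real"
  proof (rule AE_eq_0_if_integral_Ioi_eq_0)
    show "integrable lborel (\<lambda>x. h (G x))" by (rule integrable_bounded_linear[OF h int])
    fix a
    have "(\<integral>x. h (G x) * indicator {a<..} x \<partial>lborel) = (\<integral>x. h (G x * indicator {a<..} x) \<partial>lborel)"
      using linear_0[OF bounded_linear.linear[OF h]]
      by (intro Bochner_Integration.integral_cong) (auto simp: indicator_def)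
    also have "\<dots> = h (\<integral>x. G x * indicator {a<..} x \<partial>lborel)"
      by (rule integral_bounded_linear[OF h iI]) simp
    finally show "(\<integral>x. h (G x) * indicator {a<..} x \<partial>lborel) = 0"
      using integral_mult_indicator_Ioi_eq_0[OF int hz supp] linear_0[OF bounded_linear.linear[OF h]]
      by simp
  qed
  from this[OF bounded_linear_Re] this[OF bounded_linear_Im] show ?thesis
    by eventually_elim (simp add: complex_eq_iff)
qed

section \<open>Integrals of periodic extensions\<close>

lemma exp_i_int_2pi: "exp (\<i> * of_real (of_int k * (2*pi))) = 1"
  using exp_2pi_1_int[of k] by (simp add: mult.commute mult.left_commute)

lemma integral_Icc_eq_Ico:
  fixes F :: "real \<Rightarrow> complex"
  assumes [measurable]: "F \<in> borel_measurable borel"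
  shows "integrable lborel (\<lambda>x. indicator {a..b} x *\<^sub>R F x) \<longleftrightarrow> integrable lborel (\<lambda>x. indicator {a..<b} x *\<^sub>R F x)"
    and "(\<integral>x. indicator {a..b} x *\<^sub>R F x \<partial>lborel) = (\<integral>x. indicator {a..<b} x *\<^sub>R F x \<partial>lborel)"
proof -
  have ae: "AE x in lborel. indicator {a..b} x *\<^sub>R F x = indicator {a..<b} x *\<^sub>R F x"
    using AE_lborel_singleton[of b] by eventually_elim (auto simp: indicator_def)
  show "integrable lborel (\<lambda>x. indicator {a..b} x *\<^sub>R F x) \<longleftrightarrow> integrable lborel (\<lambda>x. indicator {a..<b} x *\<^sub>R F x)"
    by (rule integrable_cong_AE) (use ae in auto)
  show "(\<integral>x. indicator {a..b} x *\<^sub>R F x \<partial>lborel) = (\<integral>x. indicator {a..<b} x *\<^sub>R F x \<partial>lborel)"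
    by (rule integral_cong_AE) (use ae in auto)
qed

lemma integral_indicator_Ico_shift:
  fixes F :: "real \<Rightarrow> complex"
  shows "integrable lborel (\<lambda>x. indicator {a..<b} x *\<^sub>R F (x + t)) \<longleftrightarrow> integrable lborel (\<lambda>y. indicator {a+t..<b+t} y *\<^sub>R F y)"
    and "(\<integral>x. indicator {a..<b} x *\<^sub>R F (x + t) \<partial>lborel) = (\<integral>y. indicator {a+t..<b+t} y *\<^sub>R F y \<partial>lborel)"
proof -
  let ?f = "\<lambda>y. indicator {a+t..<b+t} y *\<^sub>R F y"
  have e: "(\<lambda>x. ?f (t + 1 * x)) = (\<lambda>x. indicator {a..<b} x *\<^sub>R F (x + t))"
    by (auto simp: indicator_def add.commute)
  show "integrable lborel (\<lambda>x. indicator {a..<b} x *\<^sub>R F (x + t)) \<longleftrightarrow> integrable lborel ?f"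
    using lborel_integrable_real_affine_iff[of 1 ?f t] e by simp
  show "(\<integral>x. indicator {a..<b} x *\<^sub>R F (x + t) \<partial>lborel) = (\<integral>y. ?f y \<partial>lborel)"
    using lborel_integral_real_affine[of 1 ?f t] e by simp
qed

text \<open>Split \<open>[d, 2\<pi> + d)\<close> at \<open>2\<pi>\<close> and move the part beyond \<open>2\<pi>\<close> back by one period.\<close>
lemma periodic_integral_Ico_shift:
  fixes F :: "real \<Rightarrow> complex"
  assumes per: "\<And>x. F (x + 2*pi) = F x"
    and [measurable]: "F \<in> borel_measurable borel"
    and int: "integrable lborel (\<lambda>x. indicator {0..<2*pi} x *\<^sub>R F x)"
    and d: "0 \<le> d" "d < 2*pi"
  shows "integrable lborel (\<lambda>x. indicator {0..<2*pi} x *\<^sub>R F (x + d))"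
    and "(\<integral>x. indicator {0..<2*pi} x *\<^sub>R F (x + d) \<partial>lborel) = (\<integral>x. indicator {0..<2*pi} x *\<^sub>R F x \<partial>lborel)"
proof -
  have iA: "integrable lborel (\<lambda>x. indicator A x *\<^sub>R F x)" if "A \<in> sets borel" "A \<subseteq> {0..<2*pi}" for A
  proof -
    have "integrable lborel (\<lambda>x. indicator A x *\<^sub>R (indicator {0..<2*pi} x *\<^sub>R F x))"
      using that by (intro integrable_mult_indicator int) auto
    moreover have "(\<lambda>x. indicator A x *\<^sub>R (indicator {0..<2*pi} x *\<^sub>R F x)) = (\<lambda>x. indicator A x *\<^sub>R F x)"
      using that by (intro ext) (auto simp: indicator_def)
    ultimately show ?thesis by simp
  qed
  have i1: "integrable lborel (\<lambda>x. indicator {d..<2*pi} x *\<^sub>R F x)" using d by (intro iA) auto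
  have i2': "integrable lborel (\<lambda>x. indicator {0..<d} x *\<^sub>R F x)" using d by (intro iA) auto
  have e2: "(\<lambda>x. indicator {0..<d} x *\<^sub>R F (x + 2*pi)) = (\<lambda>x. indicator {0..<d} x *\<^sub>R F x)"
    using per by auto
  have i2: "integrable lborel (\<lambda>y. indicator {2*pi..<2*pi+d} y *\<^sub>R F y)"
    using integral_indicator_Ico_shift(1)[of 0 d F "2*pi"] i2' e2 by (simp add: add.commute)
  have I2: "(\<integral>y. indicator {2*pi..<2*pi+d} y *\<^sub>R F y \<partial>lborel) = (\<integral>x. indicator {0..<d} x *\<^sub>R F x \<partial>lborel)"
    using integral_indicator_Ico_shift(2)[of 0 d F "2*pi"] e2 by (simp add: add.commute)
  have split: "indicator {d..<2*pi+d} y *\<^sub>R F y = indicator {d..<2*pi} y *\<^sub>R F y + indicator {2*pi..<2*pi+d} y *\<^sub>R F y" for y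
    using d by (auto simp: indicator_def)
  have split2: "indicator {0..<2*pi} y *\<^sub>R F y = indicator {0..<d} y *\<^sub>R F y + indicator {d..<2*pi} y *\<^sub>R F y" for y
    using d by (auto simp: indicator_def)
  have iS: "integrable lborel (\<lambda>y. indicator {d..<2*pi+d} y *\<^sub>R F y)"
    unfolding split using i1 i2 by simp
  show "integrable lborel (\<lambda>x. indicator {0..<2*pi} x *\<^sub>R F (x + d))"
    using integral_indicator_Ico_shift(1)[of 0 "2*pi" F d] iS by (simp add: add.commute)
  have "(\<integral>x. indicator {0..<2*pi} x *\<^sub>R F (x + d) \<partial>lborel) = (\<integral>y. indicator {d..<2*pi+d} y *\<^sub>R F y \<partial>lborel)"
    using integral_indicator_Ico_shift(2)[of 0 "2*pi" F d] by (simp add: add.commute)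
  also have "\<dots> = (\<integral>y. indicator {d..<2*pi} y *\<^sub>R F y \<partial>lborel) + (\<integral>y. indicator {2*pi..<2*pi+d} y *\<^sub>R F y \<partial>lborel)"
    unfolding split using i1 i2 by simp
  also have "\<dots> = (\<integral>y. indicator {0..<d} y *\<^sub>R F y \<partial>lborel) + (\<integral>y. indicator {d..<2*pi} y *\<^sub>R F y \<partial>lborel)"
    using I2 by simp
  also have "\<dots> = (\<integral>x. indicator {0..<2*pi} x *\<^sub>R F x \<partial>lborel)"
    unfolding split2 using i1 i2' by simp
  finally show "(\<integral>x. indicator {0..<2*pi} x *\<^sub>R F (x + d) \<partial>lborel) = (\<integral>x. indicator {0..<2*pi} x *\<^sub>R F x \<partial>lborel)" .
qed

lemma periodic_set_integral_shift:
  fixes F :: "real \<Rightarrow> complex"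
  assumes per: "\<And>x (k::int). F (x + 2*pi*k) = F x"
    and [measurable]: "F \<in> borel_measurable borel"
    and int: "set_integrable lborel {0..2*pi} F"
  shows "set_integrable lborel {0..2*pi} (\<lambda>x. F (x + c))"
    and "(LINT x:{0..2*pi}|lborel. F (x + c)) = (LINT x:{0..2*pi}|lborel. F x)"
proof -
  define n where "n = \<lfloor>c / (2*pi)\<rfloor>"
  define d where "d = c - 2*pi*n"
  have d: "0 \<le> d" "d < 2*pi"
  proof -
    have "real_of_int n \<le> c / (2*pi)" "c / (2*pi) < real_of_int n + 1" unfolding n_def by linarith+
    then show "0 \<le> d" "d < 2*pi" unfolding d_def by (auto simp: field_simps)
  qed
  have Fc: "F (x + c) = F (x + d)" for x
    using per[of "x + d" n] unfolding d_def by (simp add: algebra_simps)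
  have per1: "F (x + 2*pi) = F x" for x using per[of x 1] by simp
  have [measurable]: "(\<lambda>x. F (x + d)) \<in> borel_measurable borel" by measurable
  have int': "integrable lborel (\<lambda>x. indicator {0..<2*pi} x *\<^sub>R F x)"
    using int integral_Icc_eq_Ico(1)[of F 0 "2*pi"] unfolding set_integrable_def by simp
  note P = periodic_integral_Ico_shift[OF per1 _ int' d]
  show "set_integrable lborel {0..2*pi} (\<lambda>x. F (x + c))"
    unfolding set_integrable_def Fc using P(1) integral_Icc_eq_Ico(1)[of "\<lambda>x. F (x + d)" 0 "2*pi"] by simp
  show "(LINT x:{0..2*pi}|lborel. F (x + c)) = (LINT x:{0..2*pi}|lborel. F x)"
    unfolding set_lebesgue_integral_def Fc
    using P(2) integral_Icc_eq_Ico(2)[of "\<lambda>x. F (x + d)" 0 "2*pi"] integral_Icc_eq_Ico(2)[of F 0 "2*pi"] by simp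
qed

lemma per_ext_periodic: "per_ext f (x + 2*pi * of_int k) = per_ext f x"
proof -
  have "(x + 2*pi * of_int k) / (2*pi) = x / (2*pi) + of_int k" by (simp add: field_simps)
  then have "\<lfloor>(x + 2*pi * of_int k) / (2*pi)\<rfloor> = \<lfloor>x / (2*pi)\<rfloor> + k" by simp
  then show ?thesis unfolding per_ext_def by (simp add: algebra_simps)
qed

lemma per_ext_eq: "0 \<le> x \<Longrightarrow> x < 2*pi \<Longrightarrow> per_ext f x = f x"
proof -
  assume x: "0 \<le> x" "x < 2*pi"
  have "\<lfloor>x / (2*pi)\<rfloor> = 0" using x by (simp add: floor_eq_iff field_simps)
  then show ?thesis unfolding per_ext_def by simp
qed

lemma borel_measurable_per_ext[measurable]:
  assumes [measurable]: "f \<in> borel_measurable borel"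
  shows "per_ext f \<in> borel_measurable borel"
  unfolding per_ext_def by measurable

lemma set_integral_cong_except_point:
  fixes f g :: "real \<Rightarrow> complex"
  assumes [measurable]: "f \<in> borel_measurable borel" "g \<in> borel_measurable borel"
    and ae: "\<And>x. x \<in> S \<Longrightarrow> x \<noteq> b \<Longrightarrow> f x = g x" and [measurable]: "S \<in> sets borel"
  shows "set_integrable lborel S f \<longleftrightarrow> set_integrable lborel S g"
    and "(LINT x:S|lborel. f x) = (LINT x:S|lborel. g x)"
proof -
  have a: "AE x in lborel. indicator S x *\<^sub>R f x = indicator S x *\<^sub>R g x"
    using AE_lborel_singleton[of b] by eventually_elim (auto simp: ae indicator_def)
  show "set_integrable lborel S f \<longleftrightarrow> set_integrable lborel S g"
    unfolding set_integrable_def by (rule integrable_cong_AE) (use a in auto)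
  show "(LINT x:S|lborel. f x) = (LINT x:S|lborel. g x)"
    unfolding set_lebesgue_integral_def by (rule integral_cong_AE) (use a in auto)
qed

lemma set_integral_per_ext_shift_mult_exp:
  fixes f :: "real \<Rightarrow> complex"
  assumes [measurable]: "f \<in> borel_measurable borel" and int: "set_integrable lborel {0..2*pi} f"
  shows "set_integrable lborel {0..2*pi} (\<lambda>x. per_ext f (x + c) * exp (- \<i> * of_real (of_int j * x)))"
    and "(LINT x:{0..2*pi}|lborel. per_ext f (x + c) * exp (- \<i> * of_real (of_int j * x))) =
         exp (\<i> * of_real (of_int j * c)) * (LINT x:{0..2*pi}|lborel. f x * exp (- \<i> * of_real (of_int j * x)))"
proof -
  define F where "F y = per_ext f y * exp (- \<i> * of_real (of_int j * y))" for y
  have [measurable]: "F \<in> borel_measurable borel" unfolding F_def by measurable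
  have per: "F (x + 2*pi * of_int k) = F x" for x k
  proof -
    have "exp (- \<i> * of_real (of_int j * (x + 2*pi * of_int k))) = exp (- \<i> * of_real (of_int j * x)) * exp (\<i> * of_real (of_int (- j * k) * (2*pi)))"
      by (simp add: exp_add[symmetric] algebra_simps)
    also have "exp (\<i> * of_real (of_int (- j * k) * (2*pi))) = 1" by (rule exp_i_int_2pi)
    finally show ?thesis unfolding F_def by (simp add: per_ext_periodic)
  qed
  have ifx: "set_integrable lborel {0..2*pi} (\<lambda>x. f x * exp (- \<i> * of_real (of_int j * x)))"
    by (rule set_integrable_mult_bounded[OF int, where B=1]) (auto simp: norm_exp_i_times[of "- (of_int j * _)", simplified])
  have ceq: "x \<in> {0..2*pi} \<Longrightarrow> x \<noteq> 2*pi \<Longrightarrow> F x = f x * exp (- \<i> * of_real (of_int j * x))" for x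
    unfolding F_def by (simp add: per_ext_eq)
  have iF: "set_integrable lborel {0..2*pi} F"
    using set_integral_cong_except_point(1)[of F "\<lambda>x. f x * exp (- \<i> * of_real (of_int j * x))" "{0..2*pi}" "2*pi", OF _ _ ceq] ifx by simp
  have IF: "(LINT x:{0..2*pi}|lborel. F x) = (LINT x:{0..2*pi}|lborel. f x * exp (- \<i> * of_real (of_int j * x)))"
    using set_integral_cong_except_point(2)[of F "\<lambda>x. f x * exp (- \<i> * of_real (of_int j * x))" "{0..2*pi}" "2*pi", OF _ _ ceq] by simp
  have e: "per_ext f (x + c) * exp (- \<i> * of_real (of_int j * x)) = exp (\<i> * of_real (of_int j * c)) * F (x + c)" for x
    unfolding F_def by (simp add: exp_add[symmetric] algebra_simps)
  note P = periodic_set_integral_shift[OF per _ iF, of c]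
  show "set_integrable lborel {0..2*pi} (\<lambda>x. per_ext f (x + c) * exp (- \<i> * of_real (of_int j * x)))"
    unfolding e using P(1) by (intro set_integrable_mult_right) auto
  show "(LINT x:{0..2*pi}|lborel. per_ext f (x + c) * exp (- \<i> * of_real (of_int j * x))) =
         exp (\<i> * of_real (of_int j * c)) * (LINT x:{0..2*pi}|lborel. f x * exp (- \<i> * of_real (of_int j * x)))"
    unfolding e using P(2) IF by simp
qed

section \<open>Coefficients with respect to the eigenfunctions\<close>

lemma set_integral_exp_i_int:
  "(LINT x:{0..2*pi}|lborel. exp (\<i> * of_real (of_int k * x))) = (if k = 0 then 2*pi else 0)"
proof -
  have "(LINT x:{0..2*pi}|lborel. exp (\<i> * of_real (of_int k * x)))
      = integral {0..2*pi} (\<lambda>x. exp (\<i> * of_real (of_int k * x)))"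
    by (intro set_borel_integral_eq_integral(2) borel_integrable_atLeastAtMost' continuous_intros)
  also have "\<dots> = (if k = 0 then 2*pi else 0)"
  proof (cases "k = 0")
    case True then show ?thesis by (simp add: scaleR_conv_of_real)
  next
    case False
    have "integral {0..2*pi} (\<lambda>x. exp (\<i> * of_real (of_int k * x)))
        = integral {0..2*pi} (\<lambda>x. exp ((\<i> * of_int k) * of_real x))"
      by (simp add: mult.assoc)
    also have "\<dots> = (exp ((\<i> * of_int k) * of_real (2*pi)) - 1) / (\<i> * of_int k)"
      using False by (intro integral_exp) auto
    also have "exp ((\<i> * of_int k) * of_real (2*pi)) = 1"
      using exp_i_int_2pi[of k] by (simp add: mult.assoc)
    finally show ?thesis using False by simp
  qed
  finally show ?thesis .
qed

lemma phi_mult_cnj_phi: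
  "phi \<theta> l x * cnj (phi \<theta> j x) = exp (\<i> * of_real (of_int (l - j) * x)) / (2 * pi)"
proof -
  have s: "complex_of_real (sqrt (2 * pi)) * complex_of_real (sqrt (2 * pi)) = 2 * pi"
    by (simp flip: of_real_mult)
  have "exp (\<i> * complex_of_real ((real_of_int l + \<theta>) * x)) * exp (- (\<i> * complex_of_real ((real_of_int j + \<theta>) * x)))
      = exp (\<i> * of_real (of_int (l - j) * x))"
    by (simp add: exp_add[symmetric] algebra_simps)
  then show ?thesis using s unfolding phi_def by (simp add: exp_cnj)
qed

lemma phi_orthonormal:
  "(LINT x:{0..2*pi}|lborel. phi \<theta> l x * cnj (phi \<theta> j x)) = (if l = j then 1 else 0)"
proof -
  have "(LINT x:{0..2*pi}|lborel. phi \<theta> l x * cnj (phi \<theta> j x)) =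
      (LINT x:{0..2*pi}|lborel. exp (\<i> * of_real (of_int (l - j) * x))) / (2 * pi)"
    unfolding phi_mult_cnj_phi by (simp add: set_integral_divide_zero)
  also have "\<dots> = (if l = j then 1 else 0)" by (subst set_integral_exp_i_int) simp
  finally show ?thesis .
qed

lemma continuous_on_phi: "continuous_on S (phi \<theta> j)"
  unfolding phi_def by (intro continuous_intros) auto

lemma borel_measurable_cnj_phi[measurable]: "(\<lambda>x. cnj (phi \<theta> j x)) \<in> borel_measurable borel"
  by (intro borel_measurable_continuous_onI continuous_on_cnj continuous_on_phi)

lemma norm_phi_le_1: "norm (phi \<theta> j x) \<le> 1"
proof -
  have "1 \<le> sqrt (2 * pi)" using pi_gt3 by (simp add: real_le_rsqrt)
  then show ?thesis unfolding phi_def by (simp add: norm_divide norm_exp_i_times)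
qed

lemma set_integrable_mult_cnj_phi:
  "set_integrable lborel {0..2*pi} f \<Longrightarrow> set_integrable lborel {0..2*pi} (\<lambda>x. f x * cnj (phi \<theta> j x))"
  by (rule set_integrable_mult_bounded[where B=1]) (auto simp: norm_phi_le_1)

lemma inner_L2_diff_phi:
  assumes "set_integrable lborel {0..2*pi} f" "set_integrable lborel {0..2*pi} g"
  shows "inner_L2 (\<lambda>x. f x - g x) (phi \<theta> j) = inner_L2 f (phi \<theta> j) - inner_L2 g (phi \<theta> j)"
  unfolding inner_L2_def
  using set_integral_diff(2)[OF assms[THEN set_integrable_mult_cnj_phi[where \<theta>=\<theta> and j=j]]]
  by (simp add: left_diff_distrib)

lemma inner_L2_partial_sol_phi:
  assumes j: "j \<in> {-int N..int N}"
  shows "inner_L2 (\<lambda>x. partial_sol \<theta> a0 a1 a2 u0 N x t) (phi \<theta> j) =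
    inner_L2 u0 (phi \<theta> j) * exp (- \<i> * complex_of_real (Ppoly a0 a1 a2 (real_of_int j + \<theta>) * t))"
proof -
  define C where "C l = inner_L2 u0 (phi \<theta> l) * exp (- \<i> * complex_of_real (Ppoly a0 a1 a2 (real_of_int l + \<theta>) * t))" for l
  have "inner_L2 (\<lambda>x. partial_sol \<theta> a0 a1 a2 u0 N x t) (phi \<theta> j) =
     (LINT x:{0..2*pi}|lborel. (\<Sum>l\<in>{-int N..int N}. C l * (phi \<theta> l x * cnj (phi \<theta> j x))))"
    unfolding inner_L2_def partial_sol_def C_def by (simp add: sum_distrib_left mult_ac)
  also have "\<dots> = (\<Sum>l\<in>{-int N..int N}. C l * (LINT x:{0..2*pi}|lborel. phi \<theta> l x * cnj (phi \<theta> j x)))"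
    by (subst set_integral_sum(2))
       (auto intro!: set_integrable_mult_right borel_integrable_atLeastAtMost' continuous_on_mult
         continuous_on_cnj continuous_on_phi)
  also have "\<dots> = C j" using j by (simp add: phi_orthonormal if_distrib sum.delta cong: if_cong)
  finally show ?thesis unfolding C_def .
qed

lemma cnj_phi:
  "cnj (phi \<theta> j x) =
     exp (- \<i> * of_real (\<theta> * x)) * exp (- \<i> * of_real (of_int j * x)) / of_real (sqrt (2 * pi))"
proof -
  have "exp (- \<i> * of_real (\<theta> * x)) * exp (- \<i> * of_real (of_int j * x))
      = exp (- (\<i> * of_real ((of_int j + \<theta>) * x)))"
    by (simp add: exp_add[symmetric] algebra_simps)
  then show ?thesis unfolding phi_def by (simp add: exp_cnj)
qed

lemma in_L2_imp_set_integrable: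
  assumes "in_L2 f"
  shows "set_integrable lborel {0..2*pi} f"
proof (rule set_integrable_bound[where f="\<lambda>x. 1 + (cmod (f x))^2"])
  show "set_integrable lborel {0..2*pi} (\<lambda>x. 1 + (cmod (f x))^2)"
    using assms unfolding in_L2_def
    by (intro set_integral_add(1)) (auto simp: set_integrable_def integrable_indicator_iff emeasure_lborel_Icc_eq)
  have [measurable]: "f \<in> borel_measurable borel" using assms unfolding in_L2_def by simp
  show "set_borel_measurable lborel {0..2*pi} f"
    unfolding set_borel_measurable_def by measurable
  have "r \<le> 1 + r^2" for r :: real
    using zero_le_power2[of "r - 1"] unfolding power2_diff by simp (use zero_le_power2[of r] in linarith)
  then show "AE x in lborel. x \<in> {0..2*pi} \<longrightarrow> norm (f x) \<le> norm (1 + (cmod (f x))^2)"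
    by (intro AE_I2) simp
qed

lemma in_L2_diff:
  assumes f: "in_L2 f" and g: "in_L2 g"
  shows "in_L2 (\<lambda>x. f x - g x)"
  unfolding in_L2_def
proof
  have [measurable]: "f \<in> borel_measurable lborel" "g \<in> borel_measurable lborel"
    using assms unfolding in_L2_def by auto
  show "(\<lambda>x. f x - g x) \<in> borel_measurable lborel" by measurable
  show "set_integrable lborel {0..2*pi} (\<lambda>x. (cmod (f x - g x))^2)"
  proof (rule set_integrable_bound[where f="\<lambda>x. 2 * (cmod (f x))^2 + 2 * (cmod (g x))^2"])
    show "set_integrable lborel {0..2*pi} (\<lambda>x. 2 * (cmod (f x))^2 + 2 * (cmod (g x))^2)"
      using assms unfolding in_L2_def by (intro set_integral_add(1) set_integrable_mult_right) auto
    show "set_borel_measurable lborel {0..2*pi} (\<lambda>x. (cmod (f x - g x))^2)"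
      unfolding set_borel_measurable_def by measurable
    have "(cmod (f x - g x))^2 \<le> 2 * (cmod (f x))^2 + 2 * (cmod (g x))^2" for x
    proof -
      have "(cmod (f x - g x))^2 \<le> (cmod (f x) + cmod (g x))^2"
        by (intro power_mono norm_triangle_ineq4) simp
      also have "\<dots> \<le> 2 * (cmod (f x))^2 + 2 * (cmod (g x))^2"
        using zero_le_power2[of "cmod (f x) - cmod (g x)"] by (simp add: power2_eq_square algebra_simps)
      finally show ?thesis .
    qed
    then show "AE x in lborel. x \<in> {0..2*pi} \<longrightarrow>
        norm ((cmod (f x - g x))^2) \<le> norm (2 * (cmod (f x))^2 + 2 * (cmod (g x))^2)"
      by (intro AE_I2) simp
  qed
qed

lemma continuous_imp_in_L2:
  assumes "continuous_on UNIV f"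
  shows "in_L2 f"
  unfolding in_L2_def
  using assms by (auto intro!: borel_measurable_continuous_onI borel_integrable_atLeastAtMost'
      continuous_intros intro: continuous_on_subset)

text \<open>AM-GM with a free parameter \<open>e\<close> stands in for the Cauchy-Schwarz inequality.\<close>
lemma norm_inner_L2_phi_le:
  assumes f: "in_L2 f" and e: "e > 0"
  shows "norm (inner_L2 f (phi \<theta> j)) \<le> pi * e + (LINT x:{0..2*pi}|lborel. (cmod (f x))^2) / (2 * e)"
proof -
  have int: "set_integrable lborel {0..2*pi} (\<lambda>x. f x * cnj (phi \<theta> j x))"
    by (intro set_integrable_mult_cnj_phi in_L2_imp_set_integrable f)
  have const: "set_integrable lborel {0..2*pi} (\<lambda>x. e / 2)"
    unfolding set_integrable_def by (simp add: integrable_indicator_iff emeasure_lborel_Icc_eq)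
  have sq: "set_integrable lborel {0..2*pi} (\<lambda>x. (cmod (f x))^2 / (2 * e))"
    using f unfolding in_L2_def by (simp add: set_integrable_divide)
  have "norm (inner_L2 f (phi \<theta> j)) \<le> (LINT x:{0..2*pi}|lborel. norm (f x * cnj (phi \<theta> j x)))"
    unfolding inner_L2_def by (rule set_integral_norm_bound[OF int])
  also have "\<dots> \<le> (LINT x:{0..2*pi}|lborel. e / 2 + (cmod (f x))^2 / (2 * e))"
  proof (rule set_integral_mono[OF set_integrable_norm[OF int] set_integral_add(1)[OF const sq]])
    fix x
    have "norm (f x * cnj (phi \<theta> j x)) \<le> cmod (f x)"
      using norm_phi_le_1[of \<theta> j x] by (simp add: norm_mult mult_left_le)
    also have "\<dots> \<le> e / 2 + (cmod (f x))^2 / (2 * e)"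
    proof -
      have "2 * e * cmod (f x) \<le> (cmod (f x))^2 + e^2"
        using zero_le_power2[of "cmod (f x) - e"] by (simp add: power2_eq_square algebra_simps)
      then show ?thesis using e by (simp add: field_simps power2_eq_square)
    qed
    finally show "norm (f x * cnj (phi \<theta> j x)) \<le> e / 2 + (cmod (f x))^2 / (2 * e)" .
  qed
  also have "\<dots> = (LINT x:{0..2*pi}|lborel. e / 2) + (LINT x:{0..2*pi}|lborel. (cmod (f x))^2) / (2 * e)"
    by (simp add: set_integral_add(2)[OF const sq] set_integral_divide_zero)
  also have "(LINT x:{0..2*pi}|lborel. e / 2) = pi * e"
    by (subst set_integral_const) (auto simp: emeasure_lborel_Icc_eq)
  finally show ?thesis .
qed

lemma inner_L2_phi_eq_of_L2_limit:
  assumes U: "in_L2 U" and P: "\<And>N. in_L2 (P N)"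
    and coef: "\<forall>\<^sub>F N in sequentially. inner_L2 (P N) (phi \<theta> j) = C"
    and conv: "(\<lambda>N. LINT x:{0..2*pi}|lborel. (cmod (U x - P N x))^2) \<longlonglongrightarrow> 0"
  shows "inner_L2 U (phi \<theta> j) = C"
proof -
  define D where "D = inner_L2 U (phi \<theta> j) - C"
  have bound: "norm D \<le> pi * e + (LINT x:{0..2*pi}|lborel. (cmod (U x - P N x))^2) / (2 * e)"
    if e: "e > 0" and N: "inner_L2 (P N) (phi \<theta> j) = C" for e N
  proof -
    have "D = inner_L2 (\<lambda>x. U x - P N x) (phi \<theta> j)"
      unfolding D_def N[symmetric] using U P by (intro inner_L2_diff_phi[symmetric] in_L2_imp_set_integrable)
    then show ?thesis using norm_inner_L2_phi_le[OF in_L2_diff[OF U P] e] by simp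
  qed
  have "norm D \<le> e * pi" if e: "e > 0" for e
  proof -
    have "(\<lambda>N. pi * e + (LINT x:{0..2*pi}|lborel. (cmod (U x - P N x))^2) / (2 * e)) \<longlonglongrightarrow> pi * e + 0 / (2 * e)"
      by (intro tendsto_intros conv) (use e in simp)
    then have "norm D \<le> pi * e + 0 / (2 * e)"
      by (rule tendsto_lowerbound) (use coef bound[OF e] in \<open>auto elim: eventually_mono\<close>)
    then show ?thesis by (simp add: mult.commute)
  qed
  then have "D = 0" by (intro zero_if_norm_le_epsilon_mult[where K=pi]) auto
  then show ?thesis unfolding D_def by simp
qed

lemma inner_L2_solution_phi:
  assumes "is_L2_solution \<theta> a0 a1 a2 u0 u"
  shows "inner_L2 (\<lambda>x. u x t) (phi \<theta> j) =
    inner_L2 u0 (phi \<theta> j) * exp (- \<i> * complex_of_real (Ppoly a0 a1 a2 (real_of_int j + \<theta>) * t))"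
proof (rule inner_L2_phi_eq_of_L2_limit[where P="\<lambda>N x. partial_sol \<theta> a0 a1 a2 u0 N x t"])
  show "in_L2 (\<lambda>x. u x t)"
    and "(\<lambda>N. LINT x:{0..2*pi}|lborel. (cmod (u x t - partial_sol \<theta> a0 a1 a2 u0 N x t))^2) \<longlonglongrightarrow> 0"
    using assms unfolding is_L2_solution_def by auto
  show "in_L2 (\<lambda>x. partial_sol \<theta> a0 a1 a2 u0 N x t)" for N
    unfolding partial_sol_def by (intro continuous_imp_in_L2 continuous_intros continuous_on_phi)
  show "\<forall>\<^sub>F N in sequentially. inner_L2 (\<lambda>x. partial_sol \<theta> a0 a1 a2 u0 N x t) (phi \<theta> j) =
      inner_L2 u0 (phi \<theta> j) * exp (- \<i> * complex_of_real (Ppoly a0 a1 a2 (real_of_int j + \<theta>) * t))"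
    unfolding eventually_sequentially
    by (intro exI[of _ "nat \<bar>j\<bar>"] allI impI inner_L2_partial_sol_phi) auto
qed

text \<open>Multiplying by \<open>exp (-\<i>\<theta>x)\<close> turns the \<open>phi\<close>-coefficients into ordinary Fourier
  coefficients on \<open>[0, 2\<pi>]\<close>.\<close>
lemma AE_eq_if_inner_L2_phi_eq:
  assumes f: "set_integrable lborel {0..2*pi} f" and g: "set_integrable lborel {0..2*pi} g"
    and eq: "\<And>j. inner_L2 f (phi \<theta> j) = inner_L2 g (phi \<theta> j)"
  shows "AE x in lborel. x \<in> {0..2*pi} \<longrightarrow> f x = g x"
proof -
  define G where "G x = indicator {0..2*pi} x *\<^sub>R ((f x - g x) * exp (- \<i> * of_real (\<theta> * x)))" for x
  have fg: "set_integrable lborel {0..2*pi} (\<lambda>x. f x - g x)" by (rule set_integral_diff(1)[OF f g])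
  have "integrable lborel G"
    using set_integrable_mult_bounded[OF fg, where B=1 and h="\<lambda>x. exp (- \<i> * of_real (\<theta> * x))"]
    unfolding set_integrable_def G_def by (simp add: norm_exp_i_times[of "- (_ * _)", simplified])
  moreover have "(\<integral>x. G x * exp (\<i> * of_real (of_int k * x)) \<partial>lborel) = 0" for k
  proof -
    have pointwise: "G x * exp (\<i> * of_real (of_int k * x)) =
        of_real (sqrt (2 * pi)) * (indicator {0..2*pi} x *\<^sub>R ((f x - g x) * cnj (phi \<theta> (- k) x)))" for x
      unfolding G_def cnj_phi by simp
    have "(\<integral>x. G x * exp (\<i> * of_real (of_int k * x)) \<partial>lborel)
        = of_real (sqrt (2 * pi)) * inner_L2 (\<lambda>x. f x - g x) (phi \<theta> (- k))"
      unfolding inner_L2_def set_lebesgue_integral_def pointwise by (rule integral_mult_right_zero)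
    also have "\<dots> = 0" using inner_L2_diff_phi[OF f g] eq by simp
    finally show ?thesis .
  qed
  moreover have "G x = 0" if "x \<notin> {0..2*pi}" for x using that unfolding G_def by simp
  ultimately have "AE x in lborel. G x = 0" by (rule AE_eq_0_if_fourier_coefficients_eq_0)
  then show ?thesis by eventually_elim (auto simp: G_def)
qed

section \<open>The phase at rational times\<close>

lemma sum_powers_root_of_unity:
  fixes q :: nat and d :: int
  assumes q: "q > 0"
  shows "(\<Sum>k<q. exp (\<i> * of_real (2 * pi * of_int d / of_nat q)) ^ k) = (if int q dvd d then of_nat q else 0)"
proof -
  define w where "w = exp (\<i> * of_real (2 * pi * of_int d / of_nat q))"
  have wq: "w ^ q = 1"
  proof -
    have "w ^ q = exp (of_nat q * (\<i> * of_real (2 * pi * of_int d / of_nat q)))"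
      unfolding w_def by (simp only: exp_of_nat_mult)
    also have "of_nat q * (\<i> * of_real (2 * pi * of_int d / of_nat q)) = \<i> * (of_int d * (of_real pi * 2))"
      using q by (simp add: field_simps)
    finally show ?thesis by simp
  qed
  have w1: "w = 1 \<longleftrightarrow> int q dvd d"
  proof
    assume "w = 1"
    then obtain n :: int where n: "2 * pi * of_int d / of_nat q = 2 * pi * of_int n"
      unfolding w_def exp_eq_1 by auto
    then have "of_int d = of_int n * (of_nat q :: real)" using q by (simp add: field_simps)
    then have "d = n * int q" by (metis of_int_eq_iff of_int_mult of_int_of_nat_eq)
    then show "int q dvd d" by simp
  next
    assume "int q dvd d"
    then obtain n where n: "d = int q * n" by auto
    have "\<i> * of_real (2 * pi * of_int d / of_nat q) = \<i> * (of_int n * (of_real pi * 2))"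
      using q by (simp add: n field_simps)
    then show "w = 1" unfolding w_def by simp
  qed
  show ?thesis
    unfolding w_def[symmetric] using wq w1 by (simp add: sum_gp_strict)
qed

lemma sum_characters_mod:
  fixes q m :: nat and j :: int
  assumes q: "q > 0" and m: "m < q"
  shows "(\<Sum>k<q. exp (\<i> * of_real (2 * pi * of_nat m * of_nat k / of_nat q))
                 * exp (- (\<i> * of_real (2 * pi * of_int j * of_nat k / of_nat q))))
         = (if m = nat (j mod int q) then of_nat q else 0)"
proof -
  have "exp (\<i> * of_real (2 * pi * of_nat m * of_nat k / of_nat q))
          * exp (- (\<i> * of_real (2 * pi * of_int j * of_nat k / of_nat q)))
        = exp (\<i> * of_real (2 * pi * of_int (int m - j) / of_nat q)) ^ k" for k
  proof -
    have "exp (\<i> * of_real (2 * pi * of_int (int m - j) / of_nat q)) ^ k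
        = exp (of_nat k * (\<i> * of_real (2 * pi * of_int (int m - j) / of_nat q)))"
      by (simp only: exp_of_nat_mult)
    also have "\<dots> = exp (\<i> * of_real (2 * pi * of_nat m * of_nat k / of_nat q)
                        + - (\<i> * of_real (2 * pi * of_int j * of_nat k / of_nat q)))"
      using q by (intro arg_cong[where f=exp]) (simp add: field_simps)
    finally show ?thesis by (simp only: exp_add)
  qed
  moreover have "int q dvd (int m - j) \<longleftrightarrow> m = nat (j mod int q)"
  proof -
    have "int q dvd (int m - j) \<longleftrightarrow> int m mod int q = j mod int q"
      by (simp add: mod_eq_dvd_iff)
    also have "\<dots> \<longleftrightarrow> m = nat (j mod int q)" using q m by auto
    finally show ?thesis .
  qed
  ultimately show ?thesis using sum_powers_root_of_unity[OF q, of "int m - j"] by simp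
qed

lemma periodic_sequence_dft:
  fixes g :: "int \<Rightarrow> complex" and q :: nat
  assumes q: "q > 0" and per: "\<And>j. g (j mod int q) = g j"
  shows "\<exists>c. \<forall>j. (\<Sum>k<q. c k * exp (- (\<i> * of_real (2 * pi * of_int j * of_nat k / of_nat q)))) = g j"
proof -
  define c where "c k = (\<Sum>m<q. g (int m) * exp (\<i> * of_real (2 * pi * of_nat m * of_nat k / of_nat q))) / of_nat q" for k
  have "(\<Sum>k<q. c k * exp (- (\<i> * of_real (2 * pi * of_int j * of_nat k / of_nat q)))) = g j" for j
  proof -
    have "(\<Sum>k<q. c k * exp (- (\<i> * of_real (2 * pi * of_int j * of_nat k / of_nat q))))
       = (\<Sum>m<q. g (int m) / of_nat q * (\<Sum>k<q. exp (\<i> * of_real (2 * pi * of_nat m * of_nat k / of_nat q))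
                 * exp (- (\<i> * of_real (2 * pi * of_int j * of_nat k / of_nat q)))))"
      unfolding c_def sum_divide_distrib sum_distrib_right sum_distrib_left
      by (subst sum.swap) (simp add: mult_ac)
    also have "\<dots> = (\<Sum>m<q. if m = nat (j mod int q) then g (int m) else 0)"
      by (intro sum.cong refl, subst sum_characters_mod[OF q]) (use q in auto)
    also have "\<dots> = g (int (nat (j mod int q)))"
    proof -
      have "nat (j mod int q) < q" using q by (simp add: nat_less_iff)
      then show ?thesis by (simp add: sum.delta)
    qed
    also have "\<dots> = g j" using q per[of j] by simp
    finally show ?thesis .
  qed
  then show ?thesis by blast
qed

lemma exp_quadratic_phase_mod:
  fixes q :: nat and A j :: int
  assumes q: "q > 0"
  shows "exp (- \<i> * of_real (2 * pi * of_int (A * (j mod int q)^2) / real q)) = exp (- \<i> * of_real (2 * pi * of_int (A * j^2) / real q))"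
proof -
  define r where "r = j mod int q"
  define n where "n = j div int q"
  have j: "j = int q * n + r" unfolding r_def n_def by simp
  define M where "M = A * (2 * n * r + int q * n^2)"
  have "A * j^2 = A * r^2 + int q * M" unfolding j M_def by (simp add: power2_eq_square algebra_simps)
  then have "real_of_int (A * j^2) = real_of_int (A * r^2) + real q * real_of_int M"
    by (metis of_int_add of_int_mult of_int_of_nat_eq)
  then have e: "2 * pi * of_int (A * j^2) / real q = 2 * pi * of_int (A * r^2) / real q + of_int M * (2 * pi)"
    using q by (simp add: field_simps)
  have "exp (- \<i> * of_real (2 * pi * of_int (A * j^2) / real q)) =
      exp (- \<i> * of_real (2 * pi * of_int (A * r^2) / real q) + \<i> * of_real (of_int (- M) * (2 * pi)))"
    unfolding e by (intro arg_cong[where f=exp]) (simp add: algebra_simps)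
  also have "\<dots> = exp (- \<i> * of_real (2 * pi * of_int (A * r^2) / real q))"
    by (simp only: exp_add exp_i_int_2pi mult_1_right)
  finally show ?thesis unfolding r_def by simp
qed

lemma dispersion_phase_at_rational_time:
  fixes p q :: nat
  assumes q: "q > 0"
  defines "t \<equiv> 2 * pi * real p / real q"
  obtains c :: "nat \<Rightarrow> complex" where
    "\<And>j. (\<Sum>k<q. c k * exp (- \<i> * of_real (of_int j *
              ((real_of_int a1 + 2 * real_of_int a2 * \<theta>) * t + 2 * pi * real k / real q))))
        = exp (- \<i> * complex_of_real (Ppoly a0 a1 a2 (real_of_int j + \<theta>) * t))"
proof -
  define s where "s = real_of_int a1 + 2 * real_of_int a2 * \<theta>"
  define K where "K = exp (- \<i> * of_real ((real_of_int a0 + real_of_int a1 * \<theta> + real_of_int a2 * \<theta>^2) * t))"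
  define g where "g j = K * exp (- \<i> * of_real (2 * pi * of_int (a2 * int p * j^2) / real q))" for j :: int
  have "g (j mod int q) = g j" for j
    unfolding g_def using exp_quadratic_phase_mod[OF q, of "a2 * int p" j] by simp
  then obtain c where c: "\<And>j. (\<Sum>k<q. c k * exp (- (\<i> * of_real (2 * pi * of_int j * of_nat k / of_nat q)))) = g j"
    using periodic_sequence_dft[OF q] by blast
  have "(\<Sum>k<q. c k * exp (- \<i> * of_real (of_int j * (s * t + 2 * pi * real k / real q))))
        = exp (- \<i> * complex_of_real (Ppoly a0 a1 a2 (real_of_int j + \<theta>) * t))" for j
  proof -
    have "(\<Sum>k<q. c k * exp (- \<i> * of_real (of_int j * (s * t + 2 * pi * real k / real q))))
        = exp (- \<i> * of_real (of_int j * s * t)) * (\<Sum>k<q. c k * exp (- (\<i> * of_real (2 * pi * of_int j * of_nat k / of_nat q))))"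
      unfolding sum_distrib_left
      by (intro sum.cong refl) (simp add: algebra_simps flip: exp_add)
    also have "\<dots> = exp (- \<i> * of_real (of_int j * s * t)) * g j" by (simp only: c)
    also have "\<dots> = exp (- \<i> * complex_of_real (Ppoly a0 a1 a2 (real_of_int j + \<theta>) * t))"
    proof -
      have "Ppoly a0 a1 a2 (real_of_int j + \<theta>) * t = of_int j * s * t
          + (real_of_int a0 + real_of_int a1 * \<theta> + real_of_int a2 * \<theta>^2) * t
          + 2 * pi * of_int (a2 * int p * j^2) / real q"
        unfolding Ppoly_def s_def t_def using q by (simp add: field_simps power2_eq_square)
      then show ?thesis unfolding g_def K_def by (simp add: algebra_simps flip: exp_add)
    qed
    finally show ?thesis .
  qed
  then show ?thesis using that unfolding s_def by blast
qed

section \<open>Combinations of translates\<close>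

lemma set_integral_mult_exp_eq_inner_L2:
  "(LINT x:{0..2*pi}|lborel. (exp (- \<i> * of_real (\<theta> * x)) * f x) * exp (- \<i> * of_real (of_int j * x)))
     = of_real (sqrt (2 * pi)) * inner_L2 f (phi \<theta> j)"
  unfolding inner_L2_def cnj_phi by (simp add: mult_ac)

lemma exp_mult_sum_mult_cnj_phi:
  "exp (\<i> * complex_of_real (\<theta> * x)) * (\<Sum>k\<in>K. c k * g k) * cnj (phi \<theta> j x) =
     (\<Sum>k\<in>K. (c k / of_real (sqrt (2 * pi))) * (g k * exp (- \<i> * of_real (of_int j * x))))"
proof -
  have "exp (\<i> * complex_of_real (\<theta> * x)) * exp (- \<i> * complex_of_real (\<theta> * x)) = 1"
    by (simp flip: exp_add)
  then have unimodular: "exp (\<i> * complex_of_real (\<theta> * x)) * cnj (phi \<theta> j x)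
      = exp (- \<i> * of_real (of_int j * x)) / of_real (sqrt (2 * pi))"
    unfolding cnj_phi by (metis mult.assoc mult_1 times_divide_eq_right)
  have "exp (\<i> * complex_of_real (\<theta> * x)) * (\<Sum>k\<in>K. c k * g k) * cnj (phi \<theta> j x)
      = (\<Sum>k\<in>K. c k * g k) * (exp (\<i> * complex_of_real (\<theta> * x)) * cnj (phi \<theta> j x))"
    by (simp only: mult_ac)
  also have "\<dots> = (\<Sum>k\<in>K. c k * g k) * (exp (- \<i> * of_real (of_int j * x)) / of_real (sqrt (2 * pi)))"
    by (simp only: unimodular)
  also have "\<dots> = (\<Sum>k\<in>K. (c k / of_real (sqrt (2 * pi))) * (g k * exp (- \<i> * of_real (of_int j * x))))"
    by (simp add: sum_distrib_left sum_distrib_right sum_divide_distrib mult_ac)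
  finally show ?thesis .
qed

lemma inner_L2_translates_phi:
  fixes u0 :: "real \<Rightarrow> complex" and c :: "nat \<Rightarrow> complex" and \<sigma> :: "nat \<Rightarrow> real" and \<theta> :: real
  assumes [measurable]: "u0 \<in> borel_measurable borel" and iu: "set_integrable lborel {0..2*pi} u0"
  defines "z0 \<equiv> \<lambda>y. exp (- \<i> * complex_of_real (\<theta> * y)) * u0 y"
  shows "set_integrable lborel {0..2*pi} (\<lambda>x. exp (\<i> * complex_of_real (\<theta> * x)) * (\<Sum>k<q. c k * per_ext z0 (x - \<sigma> k)))"
    and "inner_L2 (\<lambda>x. exp (\<i> * complex_of_real (\<theta> * x)) * (\<Sum>k<q. c k * per_ext z0 (x - \<sigma> k))) (phi \<theta> j)
       = inner_L2 u0 (phi \<theta> j) * (\<Sum>k<q. c k * exp (- \<i> * of_real (of_int j * \<sigma> k)))"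
proof -
  let ?e = "\<lambda>j x. exp (- \<i> * of_real (of_int j * x))"
  have [measurable]: "z0 \<in> borel_measurable borel" unfolding z0_def by measurable
  have "set_integrable lborel {0..2*pi} (\<lambda>y. u0 y * exp (- \<i> * complex_of_real (\<theta> * y)))"
    by (rule set_integrable_mult_bounded[OF iu, where B=1]) (auto simp: norm_exp_i_times[of "- (_ * _)", simplified])
  then have iz: "set_integrable lborel {0..2*pi} z0" unfolding z0_def by (simp add: mult.commute)
  have shifted_integrable: "set_integrable lborel {0..2*pi} (\<lambda>x. per_ext z0 (x - s) * ?e j x)" for s j
    using set_integral_per_ext_shift_mult_exp(1)[OF _ iz, of "- s" j] by simp
  have shifted_integral: "(LINT x:{0..2*pi}|lborel. per_ext z0 (x - s) * ?e j x) =
      exp (- \<i> * of_real (of_int j * s)) * (LINT x:{0..2*pi}|lborel. z0 x * ?e j x)" for s j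
    using set_integral_per_ext_shift_mult_exp(2)[OF _ iz, of "- s" j] by simp
  have "set_integrable lborel {0..2*pi} (\<lambda>x. c k * (exp (\<i> * complex_of_real (\<theta> * x)) * per_ext z0 (x - \<sigma> k)))" for k
    using set_integrable_mult_bounded[OF shifted_integrable[of "\<sigma> k" 0], where B=1 and h="\<lambda>x. exp (\<i> * complex_of_real (\<theta> * x))"]
    by (intro set_integrable_mult_right) (auto simp: norm_exp_i_times mult.commute)
  then show "set_integrable lborel {0..2*pi} (\<lambda>x. exp (\<i> * complex_of_real (\<theta> * x)) * (\<Sum>k<q. c k * per_ext z0 (x - \<sigma> k)))"
    unfolding sum_distrib_left by (intro set_integral_sum(1)) (simp add: mult_ac)
  have pointwise: "exp (\<i> * complex_of_real (\<theta> * x)) * (\<Sum>k<q. c k * per_ext z0 (x - \<sigma> k)) * cnj (phi \<theta> j x) =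
      (\<Sum>k<q. (c k / of_real (sqrt (2 * pi))) * (per_ext z0 (x - \<sigma> k) * ?e j x))" for x
    by (rule exp_mult_sum_mult_cnj_phi)
  have "inner_L2 (\<lambda>x. exp (\<i> * complex_of_real (\<theta> * x)) * (\<Sum>k<q. c k * per_ext z0 (x - \<sigma> k))) (phi \<theta> j)
      = (\<Sum>k<q. LINT x:{0..2*pi}|lborel. (c k / of_real (sqrt (2 * pi))) * (per_ext z0 (x - \<sigma> k) * ?e j x))"
    unfolding inner_L2_def pointwise
    by (rule set_integral_sum(2)) (intro set_integrable_mult_right shifted_integrable)
  also have "\<dots> = (\<Sum>k<q. (c k / of_real (sqrt (2 * pi))) * (exp (- \<i> * of_real (of_int j * \<sigma> k)) *
                         (of_real (sqrt (2 * pi)) * inner_L2 u0 (phi \<theta> j))))"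
    by (simp only: set_integral_mult_right shifted_integral) (simp only: z0_def set_integral_mult_exp_eq_inner_L2)
  also have "\<dots> = inner_L2 u0 (phi \<theta> j) * (\<Sum>k<q. c k * exp (- \<i> * of_real (of_int j * \<sigma> k)))"
    by (simp add: sum_distrib_left algebra_simps)
  finally show "inner_L2 (\<lambda>x. exp (\<i> * complex_of_real (\<theta> * x)) * (\<Sum>k<q. c k * per_ext z0 (x - \<sigma> k))) (phi \<theta> j)
      = inner_L2 u0 (phi \<theta> j) * (\<Sum>k<q. c k * exp (- \<i> * of_real (of_int j * \<sigma> k)))" .
qed

theorem mainTheorem6:
  fixes \<theta> :: real and a0 a1 a2 :: int and u0 :: "real \<Rightarrow> complex"
    and u :: "real \<Rightarrow> real \<Rightarrow> complex" and p q :: nat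
  assumes "0 < \<theta>" "\<theta> < 1" "a2 \<noteq> 0"
    and "in_L2 u0"
    and "0 < p" "0 < q" "coprime p q"
    and "is_L2_solution \<theta> a0 a1 a2 u0 u"
  shows "\<exists>c :: nat \<Rightarrow> complex. AE x in lborel. x \<in> {0..2*pi} \<longrightarrow>
           u x (2 * pi * real p / real q) =
             exp (\<i> * complex_of_real (\<theta> * x)) *
             (\<Sum>k<q. c k * per_ext (\<lambda>y. exp (- \<i> * complex_of_real (\<theta> * y)) * u0 y)
                (x - (real_of_int a1 + 2 * real_of_int a2 * \<theta>) * (2 * pi * real p / real q)
                   - 2 * pi * real k / real q))"
proof -
  define t where "t = 2 * pi * real p / real q"
  define \<sigma> where "\<sigma> k = (real_of_int a1 + 2 * real_of_int a2 * \<theta>) * t + 2 * pi * real k / real q" for k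
  obtain c where c: "\<And>j. (\<Sum>k<q. c k * exp (- \<i> * of_real (of_int j * \<sigma> k)))
      = exp (- \<i> * complex_of_real (Ppoly a0 a1 a2 (real_of_int j + \<theta>) * t))"
    using dispersion_phase_at_rational_time[OF \<open>0 < q\<close>] unfolding \<sigma>_def t_def by blast
  have u0: "u0 \<in> borel_measurable borel" "set_integrable lborel {0..2*pi} u0"
    using \<open>in_L2 u0\<close> in_L2_imp_set_integrable unfolding in_L2_def by auto
  have "set_integrable lborel {0..2*pi} (\<lambda>x. u x t)"
    using \<open>is_L2_solution \<theta> a0 a1 a2 u0 u\<close> in_L2_imp_set_integrable
    unfolding is_L2_solution_def by blast
  then have "AE x in lborel. x \<in> {0..2*pi} \<longrightarrow> u x t = exp (\<i> * complex_of_real (\<theta> * x)) *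
      (\<Sum>k<q. c k * per_ext (\<lambda>y. exp (- \<i> * complex_of_real (\<theta> * y)) * u0 y) (x - \<sigma> k))"
    using inner_L2_translates_phi[OF u0, where \<theta>=\<theta> and q=q and c=c and \<sigma>=\<sigma>] c
      inner_L2_solution_phi[OF \<open>is_L2_solution \<theta> a0 a1 a2 u0 u\<close>]
    by (intro AE_eq_if_inner_L2_phi_eq[where \<theta>=\<theta>]) simp_all
  then show ?thesis unfolding \<sigma>_def t_def by (auto simp: algebra_simps)
qed

end
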